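(* Let $\mathcal{X}=\mathbb{R}^d$ and $\mathcal{Y}=\mathbb{R}^k$ with Euclidean inner products. Let $f_W:\mathbb{R}^d\to\mathbb{R}^k$, $f_W(x)=\sigma(Wx)$ with $W\in\mathbb{R}^{k\times d}$ and $\sigma$ a $C$-Lipschitz function applied elementwise. Let $\mathcal{G}$ be a compact group with orthogonal representations $\phi$ on $\mathbb{R}^d$ and $\psi$ on $\mathbb{R}^k$, and assume $\sigma(\psi(g)v)=\psi(g)\sigma(v)$ for all $g\in\mathcal{G}$, $v\in\mathbb{R}^k$. Let $\mu$ be a $\mathcal{G}$-invariant probability measure on $\mathbb{R}^d$ with finite covariance $\Sigma=\int xx^\top d\mu(x)$ and assume $f_W\in L_2(\mathcal{X},\mathcal{Y},\mu)$. Then \[\|(\mathrm{id}-\mathcal{Q})f_W\|_\mu^2\le2C^2\|W^\perp\Sigma^{1/2}\|_F^2\le2C^2\|\Sigma^{1/2}\|_F^2\|W^\perp\|_F^2,\] where $W^\perp=W-\Psi(W)$ and $\Psi(W)=\int_\mathcal{G}\psi(g^{-1})W\phi(g)\,d\lambda(g)$.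
   Context: $\lambda$ is the Haar probability measure on $\mathcal{G}$ (compact, second countable, Hausdorff); representations are measurable. $\mathcal{G}$-invariance of $\mu$ means $\phi(g)X\sim\mu$ whenever $X\sim\mu$. $L_2(\mathcal{X},\mathcal{Y},\mu)$ is the space of classes of measurable $f$ with $\|f\|_\mu^2=\int\|f(x)\|_2^2d\mu(x)<\infty$. $\mathcal{Q}f(x)=\int_\mathcal{G}\psi(g^{-1})f(\phi(g)x)\,d\lambda(g)$. $\|\cdot\|_F$ is the Frobenius norm. *)

theory Defs
  imports "HOL-Probability.Probability" "HOL-Algebra.Group"
begin

definition compact_top_group :: "('g, 'b) monoid_scheme \<Rightarrow> 'g topology \<Rightarrow> bool" where
  "compact_top_group G T \<longleftrightarrow>
     group G \<and> topspace T = carrier G \<and> compact_space T \<and> Hausdorff_space T \<and>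
     second_countable T \<and>
     continuous_map (prod_topology T T) T (\<lambda>p. fst p \<otimes>\<^bsub>G\<^esub> snd p) \<and>
     continuous_map T T (\<lambda>g. inv\<^bsub>G\<^esub> g)"

definition haar_prob :: "('g, 'b) monoid_scheme \<Rightarrow> 'g topology \<Rightarrow> 'g measure \<Rightarrow> bool" where
  "haar_prob G T lam \<longleftrightarrow>
     prob_space lam \<and> space lam = carrier G \<and>
     sets lam = sigma_sets (topspace T) {U. openin T U} \<and>
     (\<forall>g\<in>carrier G. \<forall>A\<in>sets lam. emeasure lam ((\<lambda>h. g \<otimes>\<^bsub>G\<^esub> h) ` A) = emeasure lam A)"

definition orth_rep :: "('g, 'b) monoid_scheme \<Rightarrow> 'g measure \<Rightarrow> ('g \<Rightarrow> real^'n^'n) \<Rightarrow> bool" where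
  "orth_rep G lam rho \<longleftrightarrow>
     rho \<in> borel_measurable lam \<and>
     (\<forall>g\<in>carrier G. orthogonal_matrix (rho g)) \<and>
     rho \<one>\<^bsub>G\<^esub> = mat 1 \<and>
     (\<forall>g\<in>carrier G. \<forall>h\<in>carrier G. rho (g \<otimes>\<^bsub>G\<^esub> h) = rho g ** rho h)"

definition elementwise :: "(real \<Rightarrow> real) \<Rightarrow> real^'k \<Rightarrow> real^'k" where
  "elementwise s v = (\<chi> i. s (v $ i))"

definition frob_norm :: "real^'n^'m \<Rightarrow> real" where
  "frob_norm A = sqrt (\<Sum>i\<in>UNIV. \<Sum>j\<in>UNIV. (A $ i $ j)^2)"

definition psd_sqrt :: "real^'n^'n \<Rightarrow> real^'n^'n" where
  "psd_sqrt A = (THE S. transpose S = S \<and> (\<forall>x. 0 \<le> x \<bullet> (S *v x)) \<and> S ** S = A)"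

definition second_moment :: "(real^'d) measure \<Rightarrow> real^'d^'d" where
  "second_moment mu = (\<chi> i j. integral\<^sup>L mu (\<lambda>x. x $ i * x $ j))"

definition Qop :: "('g, 'b) monoid_scheme \<Rightarrow> 'g measure \<Rightarrow> ('g \<Rightarrow> real^'d^'d) \<Rightarrow> ('g \<Rightarrow> real^'k^'k)
    \<Rightarrow> (real^'d \<Rightarrow> real^'k) \<Rightarrow> real^'d \<Rightarrow> real^'k" where
  "Qop G lam phi psi f x = integral\<^sup>L lam (\<lambda>g. psi (inv\<^bsub>G\<^esub> g) *v f (phi g *v x))"

definition Psi_op :: "('g, 'b) monoid_scheme \<Rightarrow> 'g measure \<Rightarrow> ('g \<Rightarrow> real^'d^'d) \<Rightarrow> ('g \<Rightarrow> real^'k^'k)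
    \<Rightarrow> real^'d^'k \<Rightarrow> real^'d^'k" where
  "Psi_op G lam phi psi W = integral\<^sup>L lam (\<lambda>g. psi (inv\<^bsub>G\<^esub> g) ** W ** phi g)"

end

theory Submission
  imports Defs
begin

text \<open>For fixed x, equivariance of sigma rewrites psi(g^-1) f(phi(g) x) as sigma(W_g x) with
  W_g = psi(g^-1) W phi(g), so f(x) - Q f(x) is the Haar average of sigma(W x) - sigma(W_g x).
  Jensen's inequality and the Lipschitz bound give |f(x) - Q f(x)|^2 <= C^2 int |(W - W_g) x|^2 dg,
  and integrating over mu (Tonelli) yields C^2 int <W - W_g, W - W_g> dg for the inner product
  <A, B> = int (A x) . (B x) dmu(x) = tr(A Sigma B^T) on linear maps.  Invariance of mu and of the
  Haar measure (compact groups are unimodular) make A |-> A_g an isometry fixing Psi(W), and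
  expanding the square gives int <W - W_g, W - W_g> dg = 2 <W - Psi W, W - Psi W>.  Finally
  <A, A> = |A Sigma^(1/2)|_F^2, where the positive semidefinite square root is obtained from
  Rayleigh-quotient eigenvectors, and the last inequality is submultiplicativity of the Frobenius norm.\<close>

section \<open>Square roots of positive semidefinite matrices\<close>

definition pos_semidef :: "real^'n^'n \<Rightarrow> bool" where
  "pos_semidef A \<longleftrightarrow> transpose A = A \<and> (\<forall>x. 0 \<le> x \<bullet> (A *v x))"

definition outer :: "real^'n \<Rightarrow> real^'n^'n" where
  "outer u = (\<chi> i j. u$i * u$j)"

lemma outer_mult_vector: "outer u *v x = (u \<bullet> x) *\<^sub>R u"
  by (simp add: outer_def vec_eq_iff matrix_vector_mult_def inner_vec_def sum_distrib_left mult_ac)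

lemma transpose_outer [simp]: "transpose (outer u) = outer u"
  by (simp add: outer_def transpose_def vec_eq_iff mult_ac)

lemma transpose_add_matrix: "transpose (A + B) = transpose A + transpose (B :: real^'n^'m)"
  by (simp add: transpose_def vec_eq_iff)

lemma inner_symmetric_matrix:
  fixes A :: "real^'n^'n"
  assumes "transpose A = A"
  shows "x \<bullet> (A *v y) = (A *v x) \<bullet> y"
  by (metis assms dot_lmul_matrix transpose_matrix_vector)

lemma quadratic_nonpos_imp_linear_coeff_0:
  fixes a b :: real
  assumes nonpos: "\<And>t. a * t + b * t\<^sup>2 \<le> 0"
  shows "a = 0"
proof (rule ccontr)
  assume "a \<noteq> 0"
  define c where "c = \<bar>b\<bar> + 1"
  have c: "c > 0" "c + b > 0" by (auto simp: c_def)
  have "a * (a / c) + b * (a / c)\<^sup>2 = a\<^sup>2 * (c + b) / c\<^sup>2"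
    using c(1) by (simp add: power2_eq_square field_simps)
  also have "\<dots> > 0" using \<open>a \<noteq> 0\<close> c by simp
  finally show False using nonpos[of "a / c"] by simp
qed

lemma rayleigh_quotient_attains_max:
  fixes A :: "real^'n^'n"
  assumes V: "subspace V" and nontriv: "V \<noteq> {0}"
  obtains u where "u \<in> V" "norm u = 1" "\<And>x. x \<in> V \<Longrightarrow> x \<bullet> (A *v x) \<le> (u \<bullet> (A *v u)) * (x \<bullet> x)"
proof -
  define S where "S = sphere 0 1 \<inter> V"
  have "compact S" unfolding S_def by (rule compact_Int_closed[OF compact_sphere closed_subspace[OF V]])
  obtain v where v: "v \<in> V" "v \<noteq> 0" using nontriv subspace_0[OF V] by blast
  then have "(1 / norm v) *\<^sub>R v \<in> S" using V by (simp add: S_def subspace_scale)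
  then have "S \<noteq> {}" by blast
  moreover have "continuous_on S (\<lambda>x. x \<bullet> (A *v x))" by (intro continuous_intros)
  ultimately obtain u where u: "u \<in> S" and u_max: "\<And>y. y \<in> S \<Longrightarrow> y \<bullet> (A *v y) \<le> u \<bullet> (A *v u)"
    using continuous_attains_sup[OF \<open>compact S\<close>] by blast
  have "x \<bullet> (A *v x) \<le> (u \<bullet> (A *v u)) * (x \<bullet> x)" if "x \<in> V" for x
  proof (cases "x = 0")
    case False
    have "(1 / norm x) *\<^sub>R x \<in> S" using that False V by (simp add: S_def subspace_scale)
    from u_max[OF this] have "(x \<bullet> (A *v x)) / (x \<bullet> x) \<le> u \<bullet> (A *v u)"
      by (simp add: matrix_vector_mult_scaleR power2_norm_eq_inner[symmetric] power2_eq_square)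
    then show ?thesis using False by (simp add: divide_le_eq)
  qed simp
  with u show thesis by (intro that) (auto simp: S_def)
qed

lemma symmetric_matrix_max_eigenvector:
  fixes A :: "real^'n^'n"
  assumes sym: "transpose A = A" and V: "subspace V" and inv: "\<And>x. x \<in> V \<Longrightarrow> A *v x \<in> V"
    and nontriv: "V \<noteq> {0}"
  obtains u m where "u \<in> V" "norm u = 1" "A *v u = m *\<^sub>R u" "\<And>x. x \<in> V \<Longrightarrow> x \<bullet> (A *v x) \<le> m * (x \<bullet> x)"
proof -
  obtain u where uV: "u \<in> V" and "norm u = 1"
    and bound: "\<And>x. x \<in> V \<Longrightarrow> x \<bullet> (A *v x) \<le> (u \<bullet> (A *v u)) * (x \<bullet> x)"
    using rayleigh_quotient_attains_max[OF V nontriv] by blast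
  define m where "m = u \<bullet> (A *v u)"
  have uu: "u \<bullet> u = 1" using \<open>norm u = 1\<close> by (simp add: power2_norm_eq_inner[symmetric])
  \<comment> \<open>u maximises the Rayleigh quotient, so the first variation along any v in V vanishes\<close>
  have orth: "v \<bullet> (A *v u - m *\<^sub>R u) = 0" if v: "v \<in> V" for v
  proof -
    have s: "u \<bullet> (A *v v) = v \<bullet> (A *v u)" using inner_symmetric_matrix[OF sym] by (simp add: inner_commute)
    have "2 * (v \<bullet> (A *v u) - m * (u \<bullet> v)) * t + (v \<bullet> (A *v v) - m * (v \<bullet> v)) * t\<^sup>2 \<le> 0" for t
    proof -
      have "u + t *\<^sub>R v \<in> V" using uV v V by (simp add: subspace_add subspace_scale)
      from bound[OF this] show ?thesis
        by (simp add: m_def uu s inner_commute power2_eq_square algebra_simps)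
    qed
    from quadratic_nonpos_imp_linear_coeff_0[OF this] show ?thesis
      by (simp add: inner_diff_right inner_commute)
  qed
  have "A *v u - m *\<^sub>R u \<in> V" using inv uV V by (simp add: subspace_diff subspace_scale)
  from orth[OF this] have "A *v u = m *\<^sub>R u" by simp
  from that[OF uV \<open>norm u = 1\<close> this bound[folded m_def]] show thesis .
qed

lemma pos_semidef_quadratic_form_eq_0:
  assumes S: "pos_semidef S" and x: "x \<bullet> (S *v x) = 0"
  shows "S *v x = 0"
proof -
  have sym: "transpose S = S" and psd: "\<And>x. 0 \<le> x \<bullet> (S *v x)" using S by (auto simp: pos_semidef_def)
  have "y \<bullet> (S *v x) = 0" for y
  proof -
    have s: "x \<bullet> (S *v y) = y \<bullet> (S *v x)" using inner_symmetric_matrix[OF sym] by (simp add: inner_commute)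
    have "(-2 * (y \<bullet> (S *v x))) * t + (- (y \<bullet> (S *v y))) * t\<^sup>2 \<le> 0" for t
      using psd[of "x + t *\<^sub>R y"] x s
      by (simp add: power2_eq_square algebra_simps)
    from quadratic_nonpos_imp_linear_coeff_0[OF this] show ?thesis by simp
  qed
  from this[of "S *v x"] show ?thesis by simp
qed

lemma pos_semidef_add_outer:
  assumes "pos_semidef S" "0 \<le> c"
  shows "pos_semidef (S + c *\<^sub>R outer u)"
proof -
  have "x \<bullet> ((S + c *\<^sub>R outer u) *v x) = x \<bullet> (S *v x) + c * (u \<bullet> x)\<^sup>2" for x
    by (simp add: matrix_vector_mult_add_rdistrib scaleR_matrix_vector_assoc[symmetric] outer_mult_vector
        inner_add_right inner_commute power2_eq_square)
  then show ?thesis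
    using assms by (simp add: pos_semidef_def transpose_add_matrix transpose_scalar)
qed

lemma square_add_sqrt_outer_eigenvector:
  fixes A S :: "real^'n^'n"
  assumes sym: "transpose S = S" and Su: "S *v u = 0" and uu: "u \<bullet> u = 1"
    and Au: "A *v u = m *\<^sub>R u" and m: "0 \<le> m"
    and perp: "S *v (S *v (x - (u \<bullet> x) *\<^sub>R u)) = A *v (x - (u \<bullet> x) *\<^sub>R u)"
  shows "(S + sqrt m *\<^sub>R outer u) *v ((S + sqrt m *\<^sub>R outer u) *v x) = A *v x"
proof -
  define T where "T = S + sqrt m *\<^sub>R outer u"
  define x' where "x' = x - (u \<bullet> x) *\<^sub>R u"
  have T: "T *v v = S *v v + (sqrt m * (u \<bullet> v)) *\<^sub>R u" for v
    by (simp add: T_def matrix_vector_mult_add_rdistrib scaleR_matrix_vector_assoc[symmetric] outer_mult_vector)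
  have "S *v x = S *v x'"
    by (simp add: x'_def matrix_vector_mult_diff_distrib matrix_vector_mult_scaleR Su)
  moreover have "u \<bullet> (S *v x') = 0" using inner_symmetric_matrix[OF sym, of u x'] Su by simp
  ultimately have "T *v (T *v x) = S *v (S *v x') + (m * (u \<bullet> x)) *\<^sub>R u"
    using m by (simp add: T Su uu algebra_simps)
  also have "\<dots> = A *v x" using perp by (simp add: x'_def Au algebra_simps)
  finally show ?thesis by (simp add: T_def)
qed

lemma symmetric_matrix_invariant_eigenvector_complement:
  fixes A :: "real^'n^'n"
  assumes sym: "transpose A = A" and V: "subspace V" and inv: "\<And>x. x \<in> V \<Longrightarrow> A *v x \<in> V"
    and u: "u \<in> V" "u \<bullet> u = 1" "A *v u = m *\<^sub>R u"
  defines "V' \<equiv> V \<inter> {x. u \<bullet> x = 0}"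
  shows "subspace V'" and "\<And>x. x \<in> V' \<Longrightarrow> A *v x \<in> V'" and "dim V' < dim V"
proof -
  show V': "subspace V'" unfolding V'_def by (rule subspace_inter[OF V subspace_hyperplane])
  show "A *v x \<in> V'" if "x \<in> V'" for x
    using that inv inner_symmetric_matrix[OF sym, of u x] u(3) by (simp add: V'_def)
  have "u \<notin> V'" using u(2) by (simp add: V'_def)
  then have "V' \<subseteq> V" "V' \<noteq> V" using u(1) unfolding V'_def by blast+
  then show "dim V' < dim V"
    using dim_subset subspace_dim_equal[OF V' V] by (metis le_neq_implies_less)
qed

text \<open>The vanishing on the orthogonal complement of V is what keeps the new eigenvector
  in the kernel of the square root built on the smaller subspace.\<close>
lemma pos_semidef_sqrt_on_invariant_subspace:
  fixes A :: "real^'n^'n"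
  assumes A: "pos_semidef A"
  shows "subspace V \<Longrightarrow> (\<And>x. x \<in> V \<Longrightarrow> A *v x \<in> V) \<Longrightarrow>
    \<exists>S. pos_semidef S \<and> (\<forall>x\<in>V. S *v (S *v x) = A *v x) \<and> (\<forall>x. (\<forall>y\<in>V. x \<bullet> y = 0) \<longrightarrow> S *v x = 0)"
proof (induct "dim V" arbitrary: V rule: less_induct)
  case less
  note V = less.prems(1) and inv = less.prems(2)
  have sym: "transpose A = A" using A by (simp add: pos_semidef_def)
  show ?case
  proof (cases "V = {0}")
    case True
    then show ?thesis by (intro exI[of _ 0]) (auto simp: pos_semidef_def transpose_def vec_eq_iff)
  next
    case False
    then obtain u m where u: "u \<in> V" "norm u = 1" "A *v u = m *\<^sub>R u"
      using symmetric_matrix_max_eigenvector[OF sym V inv False] by blast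
    have uu: "u \<bullet> u = 1" using u(2) by (simp add: power2_norm_eq_inner[symmetric])
    have "0 \<le> u \<bullet> (A *v u)" using A by (simp add: pos_semidef_def)
    then have m: "0 \<le> m" using u(3) uu by simp
    define V' where "V' = V \<inter> {x. u \<bullet> x = 0}"
    note V' = symmetric_matrix_invariant_eigenvector_complement[OF sym V inv u(1) uu u(3), folded V'_def]
    obtain S where S: "pos_semidef S" "\<forall>x\<in>V'. S *v (S *v x) = A *v x"
        "\<forall>x. (\<forall>y\<in>V'. x \<bullet> y = 0) \<longrightarrow> S *v x = 0"
      using less.hyps[OF V'(3) V'(1,2)] by blast
    have Su: "S *v u = 0" using S(3) by (simp add: V'_def)
    have Ssym: "transpose S = S" using S(1) by (simp add: pos_semidef_def)
    have "(S + sqrt m *\<^sub>R outer u) *v ((S + sqrt m *\<^sub>R outer u) *v x) = A *v x" if "x \<in> V" for x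
    proof (rule square_add_sqrt_outer_eigenvector[OF Ssym Su uu u(3) m])
      have "x - (u \<bullet> x) *\<^sub>R u \<in> V'"
        using that u(1) V uu by (simp add: V'_def subspace_diff subspace_scale inner_diff_right)
      then show "S *v (S *v (x - (u \<bullet> x) *\<^sub>R u)) = A *v (x - (u \<bullet> x) *\<^sub>R u)" using S(2) by blast
    qed
    moreover have "(S + sqrt m *\<^sub>R outer u) *v x = 0" if "\<forall>y\<in>V. x \<bullet> y = 0" for x
      using that S(3) u(1) by (simp add: V'_def matrix_vector_mult_add_rdistrib
          scaleR_matrix_vector_assoc[symmetric] outer_mult_vector inner_commute)
    ultimately show ?thesis
      using pos_semidef_add_outer[OF S(1) real_sqrt_ge_zero[OF m]] by blast
  qed
qed

lemma pos_semidef_sqrt_exists: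
  assumes "pos_semidef (A :: real^'n^'n)"
  shows "\<exists>S. pos_semidef S \<and> S ** S = A"
proof -
  obtain S where "pos_semidef S" "\<forall>x. S *v (S *v x) = A *v x"
    using pos_semidef_sqrt_on_invariant_subspace[OF assms, of UNIV] by auto
  then show ?thesis by (metis matrix_eq matrix_vector_mul_assoc)
qed

lemma UNIV_vec_neq_0: "(UNIV :: (real^'n) set) \<noteq> {0}"
proof -
  have "axis i (1::real) \<noteq> 0" for i :: 'n by simp
  then show ?thesis by blast
qed

lemma pos_semidef_sqrt_diff_nonpos:
  fixes S T :: "real^'n^'n"
  assumes S: "pos_semidef S" and T: "pos_semidef T" and eq: "S ** S = T ** T"
  shows "x \<bullet> ((S - T) *v x) \<le> 0"
proof -
  define D where "D = S - T"
  have "transpose D = D" using S T by (simp add: D_def pos_semidef_def transpose_def vec_eq_iff)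
  then obtain u m where u: "norm u = 1" "D *v u = m *\<^sub>R u" and bound: "\<And>x. x \<bullet> (D *v x) \<le> m * (x \<bullet> x)"
    using symmetric_matrix_max_eigenvector[OF _ subspace_UNIV _ UNIV_vec_neq_0] by (metis UNIV_I)
  have "m \<le> 0"
  proof (rule ccontr)
    assume "\<not> m \<le> 0"
    \<comment> \<open>S^2 - T^2 = S D + D T, and u is an eigenvector of D\<close>
    have "0 = u \<bullet> (S *v (S *v u) - T *v (T *v u))" using eq by (simp add: matrix_vector_mul_assoc)
    also have "\<dots> = u \<bullet> (S *v (D *v u)) + u \<bullet> (D *v (T *v u))"
      by (simp add: D_def matrix_vector_mult_diff_distrib matrix_vector_mult_diff_rdistrib inner_diff_right)
    also have "\<dots> = m * (u \<bullet> (S *v u) + u \<bullet> (T *v u))"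
      using inner_symmetric_matrix[OF \<open>transpose D = D\<close>, of u "T *v u"] u(2)
      by (simp add: algebra_simps)
    finally have "u \<bullet> (S *v u) + u \<bullet> (T *v u) = 0" using \<open>\<not> m \<le> 0\<close> by simp
    then have "u \<bullet> (S *v u) = 0" "u \<bullet> (T *v u) = 0"
      using S T by (metis add_nonneg_eq_0_iff pos_semidef_def)+
    then have "S *v u = 0" "T *v u = 0" using pos_semidef_quadratic_form_eq_0 S T by blast+
    then have "D *v u = 0" by (simp add: D_def matrix_vector_mult_diff_rdistrib)
    then show False using u \<open>\<not> m \<le> 0\<close> by auto
  qed
  with bound[of x] show ?thesis by (simp add: D_def mult_nonpos_nonneg order_trans)
qed

lemma pos_semidef_sqrt_unique:
  fixes S T :: "real^'n^'n"
  assumes S: "pos_semidef S" and T: "pos_semidef T" and eq: "S ** S = T ** T"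
  shows "S = T"
proof -
  have "x \<bullet> ((S - T) *v x) = 0" for x
    using pos_semidef_sqrt_diff_nonpos[OF S T eq, of x] pos_semidef_sqrt_diff_nonpos[OF T S eq[symmetric], of x]
    by (simp add: matrix_vector_mult_diff_rdistrib inner_diff_right)
  moreover have "pos_semidef (S - T)"
    using S T calculation by (simp add: pos_semidef_def transpose_def vec_eq_iff)
  ultimately have "(S - T) *v x = 0" for x using pos_semidef_quadratic_form_eq_0 by blast
  then show ?thesis by (metis eq_iff_diff_eq_0 matrix_eq matrix_vector_mult_0)
qed

lemma psd_sqrt:
  assumes "pos_semidef A"
  shows "pos_semidef (psd_sqrt A)" and "psd_sqrt A ** psd_sqrt A = A"
proof -
  have "\<exists>!S. pos_semidef S \<and> S ** S = A"
    using pos_semidef_sqrt_exists[OF assms] pos_semidef_sqrt_unique by metis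
  then have "pos_semidef (psd_sqrt A) \<and> psd_sqrt A ** psd_sqrt A = A"
    unfolding psd_sqrt_def pos_semidef_def conj_assoc by (rule theI')
  then show "pos_semidef (psd_sqrt A)" "psd_sqrt A ** psd_sqrt A = A" by auto
qed

lemma frob_norm_sq: "(frob_norm A)\<^sup>2 = (\<Sum>i\<in>UNIV. \<Sum>j\<in>UNIV. (A $ i $ j)\<^sup>2)"
  unfolding frob_norm_def by (simp add: sum_nonneg)

lemma frob_norm_sq_eq_trace: "(frob_norm A)\<^sup>2 = trace (A ** transpose A)"
  unfolding frob_norm_sq by (simp add: trace_def matrix_matrix_mult_def transpose_def power2_eq_square)

lemma frob_norm_mult_sq_le:
  fixes A :: "real^'n^'m" and B :: "real^'l^'n"
  shows "(frob_norm (A ** B))\<^sup>2 \<le> (frob_norm A)\<^sup>2 * (frob_norm B)\<^sup>2"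
proof -
  have "(frob_norm (A ** B))\<^sup>2 = (\<Sum>i\<in>UNIV. \<Sum>l\<in>UNIV. (A $ i \<bullet> column l B)\<^sup>2)"
    by (simp add: frob_norm_sq matrix_matrix_mult_def inner_vec_def column_def)
  also have "\<dots> \<le> (\<Sum>i\<in>UNIV. \<Sum>l\<in>UNIV. (A $ i \<bullet> A $ i) * (column l B \<bullet> column l B))"
    by (intro sum_mono Cauchy_Schwarz_ineq)
  also have "\<dots> = (\<Sum>i\<in>UNIV. A $ i \<bullet> A $ i) * (\<Sum>l\<in>UNIV. column l B \<bullet> column l B)"
    by (simp add: sum_product)
  also have "(\<Sum>l\<in>UNIV. column l B \<bullet> column l B) = (\<Sum>l\<in>UNIV. \<Sum>j\<in>UNIV. (B $ j $ l)\<^sup>2)"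
    by (simp add: inner_vec_def column_def power2_eq_square)
  also have "\<dots> = (frob_norm B)\<^sup>2"
    unfolding frob_norm_sq by (rule sum.swap)
  also have "(\<Sum>i\<in>UNIV. A $ i \<bullet> A $ i) = (frob_norm A)\<^sup>2"
    unfolding frob_norm_sq by (simp add: inner_vec_def power2_eq_square)
  finally show ?thesis .
qed

lemma matrix_mult_add_right: "(X + Y) ** (B :: real^'p^'n) = X ** B + (Y :: real^'n^'m) ** B"
  by (simp add: matrix_matrix_mult_def vec_eq_iff sum.distrib distrib_right)

lemma bounded_linear_matrix_mult_both: "bounded_linear (\<lambda>X :: real^'n^'m. A ** X ** (B :: real^'p^'n))"
  unfolding linear_conv_bounded_linear[symmetric]
  by (rule linearI) (simp_all add: matrix_add_ldistrib matrix_mult_add_right matrix_scalar_ac scalar_matrix_assoc)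

lemma continuous_on_matrix_mult [continuous_intros]:
  fixes P :: "'a::topological_space \<Rightarrow> real^'n^'m" and Q :: "'a \<Rightarrow> real^'l^'n"
  assumes "continuous_on S P" "continuous_on S Q"
  shows "continuous_on S (\<lambda>x. P x ** Q x)"
  unfolding matrix_matrix_mult_def by (intro continuous_intros assms)

lemma continuous_on_matrix_vector_mult [continuous_intros]:
  fixes P :: "'a::topological_space \<Rightarrow> real^'n^'m"
  assumes "continuous_on S P" "continuous_on S v"
  shows "continuous_on S (\<lambda>x. P x *v v x)"
  unfolding matrix_vector_mult_def by (intro continuous_intros assms)

lemma norm_orthogonal_matrix:
  assumes "orthogonal_matrix (P :: real^'n^'n)"
  shows "norm P = sqrt (real CARD('n))"
proof -
  have "norm (P $ i) = 1" for i
    using assms unfolding orthogonal_matrix_orthonormal_rows by (simp add: row_def)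
  then show ?thesis by (simp add: norm_vec_def L2_set_def)
qed

lemma integrable_continuous_orthogonal:
  fixes H :: "real^'n^'n \<Rightarrow> real^'m^'m \<Rightarrow> 'c::{banach, second_countable_topology}"
  assumes M: "finite_measure M" and P: "P \<in> borel_measurable M" and Q: "Q \<in> borel_measurable M"
    and orth: "\<And>g. g \<in> space M \<Longrightarrow> orthogonal_matrix (P g) \<and> orthogonal_matrix (Q g)"
    and H: "continuous_on UNIV (\<lambda>p. H (fst p) (snd p))"
  shows "integrable M (\<lambda>g. H (P g) (Q g))"
proof -
  define K where "K = sphere (0::real^'n^'n) (sqrt CARD('n)) \<times> sphere (0::real^'m^'m) (sqrt CARD('m))"
  have "compact K" unfolding K_def by (intro compact_Times compact_sphere)
  then have "compact ((\<lambda>p. H (fst p) (snd p)) ` K)"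
    by (rule compact_continuous_image[OF continuous_on_subset[OF H subset_UNIV]])
  from compact_imp_bounded[OF this] obtain B where "\<forall>y \<in> (\<lambda>p. H (fst p) (snd p)) ` K. norm y \<le> B"
    unfolding bounded_iff by blast
  then have B: "norm (H (P g) (Q g)) \<le> B" if "g \<in> space M" for g
    using orth[OF that] by (force simp: K_def norm_orthogonal_matrix)
  show ?thesis
  proof (rule finite_measure.integrable_const_bound[OF M])
    show "AE g in M. norm (H (P g) (Q g)) \<le> B" using B by (simp add: AE_I2)
    show "(\<lambda>g. H (P g) (Q g)) \<in> borel_measurable M"
      by (rule borel_measurable_continuous_Pair[OF P Q H])
  qed
qed

lemma inner_orthogonal_matrix:
  fixes P :: "real^'n^'n"
  assumes "orthogonal_matrix P"
  shows "(P *v v) \<bullet> (P *v w) = v \<bullet> w"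
proof -
  have "(P *v v) \<bullet> (P *v w) = v \<bullet> (transpose P *v (P *v w))"
    using dot_lmul_matrix[of v "transpose P" "P *v w"] by simp
  also have "\<dots> = v \<bullet> w"
    using assms by (simp add: matrix_vector_mul_assoc orthogonal_matrix_def)
  finally show ?thesis .
qed

section \<open>Haar measure and orthogonal representations\<close>

lemma openin_prod_topology_countable_Union:
  assumes "second_countable S" "second_countable T" "openin (prod_topology S T) P"
  obtains R where "countable R" "\<And>r. r \<in> R \<Longrightarrow> \<exists>U V. openin S U \<and> openin T V \<and> r = U \<times> V" "P = \<Union>R"
proof -
  obtain BS where BS: "countable BS" "\<And>U. U \<in> BS \<Longrightarrow> openin S U"
      "\<And>U x. openin S U \<Longrightarrow> x \<in> U \<Longrightarrow> \<exists>V\<in>BS. x \<in> V \<and> V \<subseteq> U"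
    using assms(1) unfolding second_countable_def by metis
  obtain BT where BT: "countable BT" "\<And>U. U \<in> BT \<Longrightarrow> openin T U"
      "\<And>U x. openin T U \<Longrightarrow> x \<in> U \<Longrightarrow> \<exists>V\<in>BT. x \<in> V \<and> V \<subseteq> U"
    using assms(2) unfolding second_countable_def by metis
  define R where "R = (\<lambda>(U, V). U \<times> V) ` {(U, V) \<in> BS \<times> BT. U \<times> V \<subseteq> P}"
  have "countable R" unfolding R_def using BS(1) BT(1) by (blast intro: countable_subset)
  moreover have "\<exists>U V. openin S U \<and> openin T V \<and> r = U \<times> V" if "r \<in> R" for r
    using that BS(2) BT(2) by (auto simp: R_def)
  moreover have "P = \<Union>R"
  proof
    show "P \<subseteq> \<Union>R"
    proof
      fix p assume "p \<in> P"
      then obtain U V where "openin S U" "openin T V" "fst p \<in> U" "snd p \<in> V" "U \<times> V \<subseteq> P"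
        using assms(3) unfolding openin_prod_topology_alt by (metis prod.collapse)
      then obtain U' V' where "U' \<in> BS" "fst p \<in> U'" "U' \<subseteq> U" "V' \<in> BT" "snd p \<in> V'" "V' \<subseteq> V"
        using BS(3) BT(3) by metis
      then show "p \<in> \<Union>R" using \<open>U \<times> V \<subseteq> P\<close> unfolding R_def
        by (intro UnionI[of "U' \<times> V'"] image_eqI[of _ _ "(U', V')"]) (auto simp: mem_Times_iff)
    qed
  qed (auto simp: R_def)
  ultimately show thesis by (rule that)
qed

locale compact_haar_group =
  fixes G :: "('g, 'b) monoid_scheme" (structure) and T :: "'g topology" and lam :: "'g measure"
  assumes top_group: "compact_top_group G T" and haar: "haar_prob G T lam"
begin

sublocale group G using top_group by (simp add: compact_top_group_def)

sublocale haar: prob_space lam using haar by (simp add: haar_prob_def)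

lemma space_haar [simp]: "space lam = carrier G"
  using haar by (simp add: haar_prob_def)

lemma emeasure_haar_carrier [simp]: "emeasure lam (carrier G) = 1"
  using haar.emeasure_space_1 by simp

lemma prob_haar_carrier [simp]: "measure lam (carrier G) = 1"
  using haar.prob_space by simp

lemma topspace_eq_carrier: "topspace T = carrier G"
  using top_group by (simp add: compact_top_group_def)

lemma sets_haar: "sets lam = sigma_sets (carrier G) {U. openin T U}"
  using haar by (simp add: haar_prob_def topspace_eq_carrier)

lemma openin_in_sets_haar: "openin T U \<Longrightarrow> U \<in> sets lam"
  by (simp add: sets_haar)

lemma measurable_continuous_map:
  assumes "continuous_map T T f"
  shows "f \<in> lam \<rightarrow>\<^sub>M lam"
proof (rule measurable_sigma_sets[OF sets_haar])
  show "{U. openin T U} \<subseteq> Pow (carrier G)" using topspace_eq_carrier openin_subset by auto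
  show "f \<in> space lam \<rightarrow> carrier G"
    using assms topspace_eq_carrier by (auto simp: continuous_map_def)
  fix U assume "U \<in> {U. openin T U}"
  then have "openin T {x \<in> topspace T. f x \<in> U}"
    using assms openin_continuous_map_preimage by blast
  moreover have "{x \<in> topspace T. f x \<in> U} = f -` U \<inter> space lam"
    by (auto simp: topspace_eq_carrier)
  ultimately show "f -` U \<inter> space lam \<in> sets lam" by (simp add: openin_in_sets_haar)
qed

lemma measurable_inv [measurable]: "(\<lambda>g. inv g) \<in> lam \<rightarrow>\<^sub>M lam"
  using top_group by (intro measurable_continuous_map) (simp add: compact_top_group_def)

lemma measurable_mult: "(\<lambda>p. fst p \<otimes> snd p) \<in> lam \<Otimes>\<^sub>M lam \<rightarrow>\<^sub>M lam"
proof (rule measurable_sigma_sets[OF sets_haar])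
  show "{U. openin T U} \<subseteq> Pow (carrier G)" using topspace_eq_carrier openin_subset by auto
  show "(\<lambda>p. fst p \<otimes> snd p) \<in> space (lam \<Otimes>\<^sub>M lam) \<rightarrow> carrier G"
    by (auto simp: space_pair_measure)
  fix U assume "U \<in> {U. openin T U}"
  have sc: "second_countable T" using top_group by (simp add: compact_top_group_def)
  have op: "openin (prod_topology T T) {p \<in> topspace (prod_topology T T). fst p \<otimes> snd p \<in> U}"
    using top_group \<open>U \<in> {U. openin T U}\<close>
    by (intro openin_continuous_map_preimage) (auto simp: compact_top_group_def)
  obtain R where R: "countable R" "\<And>r. r \<in> R \<Longrightarrow> \<exists>U V. openin T U \<and> openin T V \<and> r = U \<times> V"
      "{p \<in> topspace (prod_topology T T). fst p \<otimes> snd p \<in> U} = \<Union>R"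
    using openin_prod_topology_countable_Union[OF sc sc op] by blast
  have "\<Union>R \<in> sets (lam \<Otimes>\<^sub>M lam)"
    using R(1,2) by (intro sets.countable_Union) (auto intro: pair_measureI openin_in_sets_haar)
  moreover have "(\<lambda>p. fst p \<otimes> snd p) -` U \<inter> space (lam \<Otimes>\<^sub>M lam) = \<Union>R"
    unfolding R(3)[symmetric] by (auto simp: space_pair_measure topspace_eq_carrier)
  ultimately show "(\<lambda>p. fst p \<otimes> snd p) -` U \<inter> space (lam \<Otimes>\<^sub>M lam) \<in> sets (lam \<Otimes>\<^sub>M lam)"
    by simp
qed

lemma measurable_mult_left [measurable]: "k \<in> carrier G \<Longrightarrow> (\<lambda>g. k \<otimes> g) \<in> lam \<rightarrow>\<^sub>M lam"
  using measurable_compose[OF measurable_Pair[OF measurable_const measurable_ident_sets] measurable_mult]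
  by simp

lemma measurable_mult_right [measurable]: "k \<in> carrier G \<Longrightarrow> (\<lambda>g. g \<otimes> k) \<in> lam \<rightarrow>\<^sub>M lam"
  using measurable_compose[OF measurable_Pair[OF measurable_ident_sets measurable_const] measurable_mult]
  by simp

lemma distr_mult_left:
  assumes k: "k \<in> carrier G"
  shows "distr lam lam (\<lambda>g. k \<otimes> g) = lam"
proof (rule measure_eqI)
  fix A assume "A \<in> sets (distr lam lam (\<lambda>g. k \<otimes> g))"
  then have A: "A \<in> sets lam" by simp
  then have "A \<subseteq> carrier G" using sets.sets_into_space by fastforce
  have "(\<lambda>g. k \<otimes> g) -` A \<inter> space lam = (\<lambda>h. inv k \<otimes> h) ` A"
  proof (intro equalityI subsetI)
    fix x assume "x \<in> (\<lambda>g. k \<otimes> g) -` A \<inter> space lam"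
    moreover have "x = inv k \<otimes> (k \<otimes> x)" if "x \<in> carrier G" using that k by (simp add: m_assoc[symmetric])
    ultimately show "x \<in> (\<lambda>h. inv k \<otimes> h) ` A" by auto
  qed (use k \<open>A \<subseteq> carrier G\<close> in \<open>auto simp: m_assoc[symmetric]\<close>)
  then show "emeasure (distr lam lam (\<lambda>g. k \<otimes> g)) A = emeasure lam A"
    using haar k A by (simp add: emeasure_distr haar_prob_def)
qed simp

lemma nn_integral_mult_left:
  assumes "k \<in> carrier G" "F \<in> borel_measurable lam"
  shows "(\<integral>\<^sup>+ g. F (k \<otimes> g) \<partial>lam) = (\<integral>\<^sup>+ g. F g \<partial>lam)"
  using nn_integral_distr[OF measurable_mult_left[OF assms(1)], of F] assms
  by (simp add: distr_mult_left)

text \<open>Compact groups are unimodular: Fubini together with left invariance shows that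
  inversion preserves the Haar measure.\<close>
lemma distr_inv: "distr lam lam (\<lambda>g. inv g) = lam"
proof (rule measure_eqI)
  interpret pair_sigma_finite lam lam
    by (simp add: pair_sigma_finite_def haar.sigma_finite_measure_axioms)
  fix A assume "A \<in> sets (distr lam lam (\<lambda>g. inv g))"
  then have A: "A \<in> sets lam" by simp
  define f :: "'g \<Rightarrow> ennreal" where "f = indicator A"
  have f [measurable]: "f \<in> borel_measurable lam" using A by (simp add: f_def)
  have "(\<lambda>p. (inv (fst p), snd p)) \<in> lam \<Otimes>\<^sub>M lam \<rightarrow>\<^sub>M lam \<Otimes>\<^sub>M lam" by measurable
  from measurable_compose[OF measurable_compose[OF this measurable_mult] f]
  have "(\<lambda>p. f (inv (fst p) \<otimes> snd p)) \<in> borel_measurable (lam \<Otimes>\<^sub>M lam)" by simp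
  then have F: "(\<lambda>(g, h). f (inv g \<otimes> h)) \<in> borel_measurable (lam \<Otimes>\<^sub>M lam)"
    by (simp add: case_prod_beta)
  have "emeasure lam A = (\<integral>\<^sup>+ g. (\<integral>\<^sup>+ h. f h \<partial>lam) \<partial>lam)"
    using A by (simp add: f_def)
  also have "\<dots> = (\<integral>\<^sup>+ g. (\<integral>\<^sup>+ h. f (inv g \<otimes> h) \<partial>lam) \<partial>lam)"
    by (rule nn_integral_cong) (simp add: nn_integral_mult_left)
  also have "\<dots> = (\<integral>\<^sup>+ h. (\<integral>\<^sup>+ g. f (inv g \<otimes> h) \<partial>lam) \<partial>lam)"
    using Fubini'[OF F] by simp
  also have "\<dots> = (\<integral>\<^sup>+ h. (\<integral>\<^sup>+ g. f (inv (inv h \<otimes> g)) \<partial>lam) \<partial>lam)"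
    by (intro nn_integral_cong) (simp add: inv_mult_group)
  also have "\<dots> = (\<integral>\<^sup>+ h. (\<integral>\<^sup>+ g. f (inv g) \<partial>lam) \<partial>lam)"
    by (rule nn_integral_cong) (simp add: nn_integral_mult_left[where F="\<lambda>g. f (inv g)"])
  also have "\<dots> = (\<integral>\<^sup>+ g. f g \<partial>distr lam lam (\<lambda>g. inv g))"
    by (simp add: nn_integral_distr)
  also have "\<dots> = emeasure (distr lam lam (\<lambda>g. inv g)) A"
    using A by (simp add: f_def)
  finally show "emeasure (distr lam lam (\<lambda>g. inv g)) A = emeasure lam A" ..
qed simp

lemma distr_mult_right:
  assumes k: "k \<in> carrier G"
  shows "distr lam lam (\<lambda>g. g \<otimes> k) = lam"
proof -
  have "distr lam lam (\<lambda>g. g \<otimes> k) = distr lam lam ((\<lambda>g. inv g) \<circ> (\<lambda>g. inv k \<otimes> g) \<circ> (\<lambda>g. inv g))"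
    using k by (intro distr_cong) (auto simp: inv_mult_group)
  also have "\<dots> = distr (distr (distr lam lam (\<lambda>g. inv g)) lam (\<lambda>g. inv k \<otimes> g)) lam (\<lambda>g. inv g)"
    using k by (simp add: distr_distr comp_assoc)
  also have "\<dots> = lam" using k by (simp add: distr_inv distr_mult_left)
  finally show ?thesis .
qed

lemma integral_mult_right:
  fixes F :: "'g \<Rightarrow> 'c::{banach, second_countable_topology}"
  assumes "k \<in> carrier G" "F \<in> borel_measurable lam"
  shows "(\<integral> g. F (g \<otimes> k) \<partial>lam) = (\<integral> g. F g \<partial>lam)"
  using integral_distr[OF measurable_mult_right[OF assms(1)] assms(2)] assms(1)
  by (simp add: distr_mult_right)

end

locale haar_orth_reps = compact_haar_group G T lam
  for G :: "('g, 'b) monoid_scheme" (structure) and T :: "'g topology" and lam :: "'g measure" +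
  fixes phi :: "'g \<Rightarrow> real^'d^'d" and psi :: "'g \<Rightarrow> real^'k^'k"
  assumes rep_phi: "orth_rep G lam phi" and rep_psi: "orth_rep G lam psi"
begin

definition act :: "'g \<Rightarrow> real^'d^'k \<Rightarrow> real^'d^'k" where
  "act g A = psi (inv g) ** A ** phi g"

lemma Psi_op_eq_integral_act: "Psi_op G lam phi psi A = (\<integral>g. act g A \<partial>lam)"
  by (simp add: Psi_op_def act_def)

lemma orthogonal_phi: "g \<in> carrier G \<Longrightarrow> orthogonal_matrix (phi g)"
  and orthogonal_psi: "g \<in> carrier G \<Longrightarrow> orthogonal_matrix (psi g)"
  using rep_phi rep_psi by (simp_all add: orth_rep_def)

lemma measurable_phi [measurable]: "phi \<in> borel_measurable lam"
  and measurable_psi_inv [measurable]: "(\<lambda>g. psi (inv g)) \<in> borel_measurable lam"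
  using rep_phi rep_psi by (auto simp: orth_rep_def)

lemma integrable_rep:
  fixes H :: "real^'k^'k \<Rightarrow> real^'d^'d \<Rightarrow> 'c::{banach, second_countable_topology}"
  assumes "continuous_on UNIV (\<lambda>p. H (fst p) (snd p))"
  shows "integrable lam (\<lambda>g. H (psi (inv g)) (phi g))"
  using assms by (intro integrable_continuous_orthogonal) (auto intro: orthogonal_phi orthogonal_psi)

lemma integrable_act: "integrable lam (\<lambda>g. act g A)"
  unfolding act_def by (rule integrable_rep[where H="\<lambda>P Q. P ** A ** Q"]) (intro continuous_intros)

lemma act_mult:
  assumes "g \<in> carrier G" "h \<in> carrier G"
  shows "act (g \<otimes> h) A = act h (act g A)"
  using assms rep_phi rep_psi by (simp add: act_def orth_rep_def inv_mult_group matrix_mul_assoc)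

lemma act_Psi_op:
  assumes h: "h \<in> carrier G"
  shows "act h (Psi_op G lam phi psi A) = Psi_op G lam phi psi A"
proof -
  have "act h (Psi_op G lam phi psi A) = (\<integral>g. act h (act g A) \<partial>lam)"
    unfolding Psi_op_eq_integral_act act_def
    by (rule integral_bounded_linear[symmetric, OF _ integrable_act[unfolded act_def]])
      (simp add: bounded_linear_matrix_mult_both)
  also have "\<dots> = (\<integral>g. act (g \<otimes> h) A \<partial>lam)"
    using h by (intro Bochner_Integration.integral_cong) (simp_all add: act_mult)
  also have "\<dots> = Psi_op G lam phi psi A"
    unfolding Psi_op_eq_integral_act
    using integral_mult_right[OF h borel_measurable_integrable[OF integrable_act]] by simp
  finally show ?thesis .
qed

end

section \<open>The second-moment inner product of linear maps\<close>

definition mat_L2_inner :: "(real^'d) measure \<Rightarrow> real^'d^'k \<Rightarrow> real^'d^'k \<Rightarrow> real" where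
  "mat_L2_inner mu A B = (\<integral>x. (A *v x) \<bullet> (B *v x) \<partial>mu)"

lemma mat_L2_inner_commute: "mat_L2_inner mu A B = mat_L2_inner mu B A"
  by (simp add: mat_L2_inner_def inner_commute)

lemma inner_mult_eq_sum: "(a \<bullet> x) * (b \<bullet> x) = (\<Sum>j\<in>UNIV. \<Sum>l\<in>UNIV. (a $ j * b $ l) * (x $ j * x $ l))"
  for a b x :: "real^'d"
  by (simp add: inner_vec_def sum_product mult_ac)

lemma inner_mult_vector_eq_sum:
  fixes A B :: "real^'d^'k"
  shows "(A *v x) \<bullet> (B *v x) = (\<Sum>i\<in>UNIV. (A $ i \<bullet> x) * (B $ i \<bullet> x))"
  unfolding inner_vec_def matrix_vector_mult_def by simp

locale finite_second_moment =
  fixes mu :: "(real^'d) measure"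
  assumes sets_mu: "sets mu = sets borel"
    and integrable_norm_sq: "integrable mu (\<lambda>x. norm x ^ 2)"
begin

lemma borel_measurable_continuous_on_mu:
  "continuous_on UNIV f \<Longrightarrow> f \<in> borel_measurable mu"
  unfolding measurable_cong_sets[OF sets_mu refl] by (rule borel_measurable_continuous_onI)

lemma integrable_component_mult: "integrable mu (\<lambda>x. x $ i * x $ j)"
proof (rule Bochner_Integration.integrable_bound[OF integrable_norm_sq])
  show "(\<lambda>x. x $ i * x $ j) \<in> borel_measurable mu"
    by (intro borel_measurable_continuous_on_mu continuous_intros)
  have "\<bar>x $ i\<bar> * \<bar>x $ j\<bar> \<le> norm x * norm x" for x :: "real^'d"
    by (intro mult_mono) (simp_all add: component_le_norm_cart)
  then show "AE x in mu. norm (x $ i * x $ j) \<le> norm (norm x ^ 2)"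
    by (simp add: abs_mult power2_eq_square)
qed

lemma integrable_inner_mult: "integrable mu (\<lambda>x. (a \<bullet> x) * (b \<bullet> x))"
  unfolding inner_mult_eq_sum
  by (intro Bochner_Integration.integrable_sum Bochner_Integration.integrable_mult_right
      integrable_component_mult)

lemma integral_inner_mult: "(\<integral>x. (a \<bullet> x) * (b \<bullet> x) \<partial>mu) = a \<bullet> (second_moment mu *v b)"
proof -
  have "(\<integral>x. (a \<bullet> x) * (b \<bullet> x) \<partial>mu) = (\<Sum>j\<in>UNIV. \<Sum>l\<in>UNIV. (a $ j * b $ l) * (\<integral>x. x $ j * x $ l \<partial>mu))"
    unfolding inner_mult_eq_sum
    by (simp add: Bochner_Integration.integral_sum Bochner_Integration.integrable_sum integrable_component_mult)
  also have "\<dots> = a \<bullet> (second_moment mu *v b)"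
    by (simp add: second_moment_def inner_vec_def matrix_vector_mult_def sum_distrib_left mult_ac)
  finally show ?thesis .
qed

lemma pos_semidef_second_moment: "pos_semidef (second_moment mu)"
proof -
  have "transpose (second_moment mu) = second_moment mu"
    by (simp add: second_moment_def transpose_def vec_eq_iff mult.commute)
  moreover have "0 \<le> v \<bullet> (second_moment mu *v v)" for v
    using integral_inner_mult[of v v, symmetric] by (simp add: integral_nonneg_AE)
  ultimately show ?thesis by (simp add: pos_semidef_def)
qed

lemma integrable_inner_mult_vector: "integrable mu (\<lambda>x. (A *v x) \<bullet> (B *v x))"
  unfolding inner_mult_vector_eq_sum by (intro Bochner_Integration.integrable_sum integrable_inner_mult)

lemma nn_integral_norm_mult_vector_sq:
  "(\<integral>\<^sup>+x. ennreal ((norm (N *v x))\<^sup>2) \<partial>mu) = ennreal (mat_L2_inner mu N N)"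
  unfolding mat_L2_inner_def power2_norm_eq_inner
  by (rule nn_integral_eq_integral[OF integrable_inner_mult_vector]) simp

lemma mat_L2_inner_eq_trace: "mat_L2_inner mu A B = trace (A ** second_moment mu ** transpose B)"
proof -
  have "mat_L2_inner mu A B = (\<Sum>i\<in>UNIV. A $ i \<bullet> (second_moment mu *v B $ i))"
    unfolding mat_L2_inner_def inner_mult_vector_eq_sum
    by (simp add: integrable_inner_mult integral_inner_mult)
  also have "\<dots> = trace (A ** second_moment mu ** transpose B)"
    by (simp add: trace_def matrix_matrix_mult_def transpose_def inner_vec_def matrix_vector_mult_def
        sum_distrib_left sum_distrib_right mult_ac) (rule sum.cong[OF refl], rule sum.swap)
  finally show ?thesis .
qed

lemma mat_L2_inner_self: "mat_L2_inner mu A A = (frob_norm (A ** psd_sqrt (second_moment mu)))\<^sup>2"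
proof -
  let ?R = "psd_sqrt (second_moment mu)"
  have R: "transpose ?R = ?R" "?R ** ?R = second_moment mu"
    using psd_sqrt[OF pos_semidef_second_moment] by (auto simp: pos_semidef_def)
  have "A ** ?R ** transpose (A ** ?R) = A ** (?R ** ?R) ** transpose A"
    using R(1) by (simp add: matrix_transpose_mul matrix_mul_assoc)
  then show ?thesis by (simp add: R(2) mat_L2_inner_eq_trace frob_norm_sq_eq_trace)
qed

lemma bounded_linear_mat_L2_inner: "bounded_linear (mat_L2_inner mu A)"
  unfolding linear_conv_bounded_linear[symmetric]
proof (rule linearI)
  show "mat_L2_inner mu A (B + C) = mat_L2_inner mu A B + mat_L2_inner mu A C" for B C
    unfolding mat_L2_inner_def
    by (simp add: matrix_vector_mult_add_rdistrib inner_add_right integrable_inner_mult_vector)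
  show "mat_L2_inner mu A (c *\<^sub>R B) = c *\<^sub>R mat_L2_inner mu A B" for c B
    unfolding mat_L2_inner_def by (simp add: scaleR_matrix_vector_assoc[symmetric])
qed

lemma mat_L2_inner_diff_right: "mat_L2_inner mu A (B - C) = mat_L2_inner mu A B - mat_L2_inner mu A C"
  by (rule linear_diff[OF bounded_linear.linear[OF bounded_linear_mat_L2_inner]])

lemma mat_L2_inner_diff_left: "mat_L2_inner mu (A - B) C = mat_L2_inner mu A C - mat_L2_inner mu B C"
  using mat_L2_inner_diff_right by (metis mat_L2_inner_commute)

lemma mat_L2_inner_orthogonal_invariant:
  assumes P: "orthogonal_matrix P" and Q: "distr mu borel (\<lambda>x. Q *v x) = mu"
  shows "mat_L2_inner mu (P ** A ** Q) (P ** B ** Q) = mat_L2_inner mu A B"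
proof -
  have "mat_L2_inner mu (P ** A ** Q) (P ** B ** Q) = (\<integral>x. (A *v (Q *v x)) \<bullet> (B *v (Q *v x)) \<partial>mu)"
    unfolding mat_L2_inner_def using inner_orthogonal_matrix[OF P]
    by (simp add: matrix_vector_mul_assoc[symmetric])
  also have "\<dots> = (\<integral>x. (A *v x) \<bullet> (B *v x) \<partial>distr mu borel (\<lambda>x. Q *v x))"
    by (rule integral_distr[symmetric])
      (auto intro: borel_measurable_continuous_on_mu borel_measurable_continuous_onI continuous_intros)
  finally show ?thesis by (simp add: Q mat_L2_inner_def)
qed

end

section \<open>The symmetrisation gap of an equivariant layer\<close>

lemma lipschitz_const_nonneg:
  fixes s :: "real \<Rightarrow> real"
  assumes "\<forall>a b. \<bar>s a - s b\<bar> \<le> C * \<bar>a - b\<bar>"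
  shows "0 \<le> C"
  using assms[rule_format, of 1 0] by simp

lemma continuous_on_lipschitz:
  fixes s :: "real \<Rightarrow> real"
  assumes lip: "\<forall>a b. \<bar>s a - s b\<bar> \<le> C * \<bar>a - b\<bar>"
  shows "continuous_on UNIV s"
  using lip lipschitz_const_nonneg[OF lip]
  by (intro lipschitz_on_continuous_on[of C]) (auto simp: lipschitz_on_def dist_real_def)

lemma continuous_on_elementwise [continuous_intros]:
  assumes "continuous_on UNIV s" "continuous_on S F"
  shows "continuous_on S (\<lambda>x. elementwise s (F x :: real^'n))"
  unfolding elementwise_def
  by (intro continuous_intros continuous_on_compose2[OF assms(1)] assms(2)) auto

lemma norm_elementwise_diff_le:
  fixes s :: "real \<Rightarrow> real"
  assumes lip: "\<forall>a b. \<bar>s a - s b\<bar> \<le> C * \<bar>a - b\<bar>"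
  shows "norm (elementwise s a - elementwise s (b :: real^'n)) \<le> C * norm (a - b)"
proof -
  have "\<bar>s (a $ i) - s (b $ i)\<bar> \<le> \<bar>C * (a $ i - b $ i)\<bar>" for i
    using lip lipschitz_const_nonneg[OF lip] by (simp add: abs_mult)
  then have "(norm (elementwise s a - elementwise s b))\<^sup>2 \<le> (norm (C *\<^sub>R (a - b)))\<^sup>2"
    unfolding power2_norm_eq_inner
    by (auto simp: inner_vec_def elementwise_def abs_le_square_iff power2_eq_square[symmetric]
        intro!: sum_mono)
  then show ?thesis using lipschitz_const_nonneg[OF lip] by (simp add: power2_le_iff_abs_le)
qed

lemma (in prob_space) norm_integral_sq_le:
  fixes f :: "'a \<Rightarrow> 'b::{banach, second_countable_topology}"
  assumes "integrable M f" "integrable M (\<lambda>x. (norm (f x))\<^sup>2)"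
  shows "(norm (\<integral>x. f x \<partial>M))\<^sup>2 \<le> (\<integral>x. (norm (f x))\<^sup>2 \<partial>M)"
proof -
  have "(norm (\<integral>x. f x \<partial>M))\<^sup>2 \<le> (\<integral>x. norm (f x) \<partial>M)\<^sup>2"
    by (intro power_mono integral_norm_bound) simp
  also have "\<dots> \<le> (\<integral>x. (norm (f x))\<^sup>2 \<partial>M)"
    using variance_positive[of "\<lambda>x. norm (f x)"] variance_eq[of "\<lambda>x. norm (f x)"] assms by simp
  finally show ?thesis .
qed


context haar_orth_reps
begin

lemma norm_symmetrisation_gap_sq_le:
  assumes lip: "\<forall>a b. \<bar>s a - s b\<bar> \<le> C * \<bar>a - b\<bar>"
    and equiv: "\<forall>g\<in>carrier G. \<forall>v. elementwise s (psi g *v v) = psi g *v elementwise s v"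
  shows "(norm (elementwise s (W *v x) - Qop G lam phi psi (\<lambda>x. elementwise s (W *v x)) x))\<^sup>2
    \<le> C\<^sup>2 * (\<integral>g. (norm ((W - act g W) *v x))\<^sup>2 \<partial>lam)"
proof -
  have s: "continuous_on UNIV s" by (rule continuous_on_lipschitz[OF lip])
  define h where "h g = psi (inv g) *v elementwise s (W *v (phi g *v x))" for g
  define k where "k g = elementwise s (W *v x) - h g" for g
  have k_act: "k g = elementwise s (W *v x) - elementwise s (act g W *v x)" if "g \<in> carrier G" for g
    using equiv inv_closed[OF that] by (simp add: k_def h_def act_def matrix_vector_mul_assoc[symmetric])
  have h: "integrable lam h"
    unfolding h_def
    by (rule integrable_rep[where H="\<lambda>P Q. P *v elementwise s (W *v (Q *v x))"]) (intro continuous_intros s)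
  then have k: "integrable lam k" by (simp add: k_def[abs_def])
  have k2: "integrable lam (\<lambda>g. (norm (k g))\<^sup>2)"
    unfolding k_def h_def
    by (rule integrable_rep[where H="\<lambda>P Q. (norm (elementwise s (W *v x) - P *v elementwise s (W *v (Q *v x))))\<^sup>2"])
      (intro continuous_intros s)
  have bound: "integrable lam (\<lambda>g. C\<^sup>2 * (norm ((W - act g W) *v x))\<^sup>2)"
    unfolding act_def
    by (rule integrable_rep[where H="\<lambda>P Q. C\<^sup>2 * (norm ((W - P ** W ** Q) *v x))\<^sup>2"]) (intro continuous_intros)
  have "(\<integral>g. k g \<partial>lam) = (\<integral>g. elementwise s (W *v x) \<partial>lam) - (\<integral>g. h g \<partial>lam)"
    unfolding k_def by (rule Bochner_Integration.integral_diff[OF haar.integrable_const h])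
  then have "elementwise s (W *v x) - Qop G lam phi psi (\<lambda>x. elementwise s (W *v x)) x = (\<integral>g. k g \<partial>lam)"
    by (simp add: Qop_def h_def)
  then have "(norm (elementwise s (W *v x) - Qop G lam phi psi (\<lambda>x. elementwise s (W *v x)) x))\<^sup>2
      \<le> (\<integral>g. (norm (k g))\<^sup>2 \<partial>lam)"
    using haar.norm_integral_sq_le[OF k k2] by simp
  also have "\<dots> \<le> (\<integral>g. C\<^sup>2 * (norm ((W - act g W) *v x))\<^sup>2 \<partial>lam)"
  proof (rule integral_mono[OF k2 bound])
    fix g assume "g \<in> space lam"
    then have "norm (k g) \<le> C * norm ((W - act g W) *v x)"
      using norm_elementwise_diff_le[OF lip] by (simp add: k_act matrix_vector_mult_diff_rdistrib)
    then show "(norm (k g))\<^sup>2 \<le> C\<^sup>2 * (norm ((W - act g W) *v x))\<^sup>2"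
      by (metis norm_ge_zero power_mono power_mult_distrib)
  qed
  finally show ?thesis by simp
qed

end

locale invariant_second_moment = haar_orth_reps G T lam phi psi + finite_second_moment mu
  for G :: "('g, 'b) monoid_scheme" (structure) and T :: "'g topology" and lam :: "'g measure"
    and phi :: "'g \<Rightarrow> real^'d^'d" and psi :: "'g \<Rightarrow> real^'k^'k" and mu :: "(real^'d) measure" +
  assumes prob_mu: "prob_space mu"
    and distr_phi: "\<forall>g\<in>carrier G. distr mu borel (\<lambda>x. phi g *v x) = mu"
begin

abbreviation Psi :: "real^'d^'k \<Rightarrow> real^'d^'k" where
  "Psi \<equiv> Psi_op G lam phi psi"

lemma mat_L2_inner_act:
  assumes "g \<in> carrier G"
  shows "mat_L2_inner mu (act g A) (act g B) = mat_L2_inner mu A B"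
  unfolding act_def using assms distr_phi
  by (intro mat_L2_inner_orthogonal_invariant orthogonal_psi) auto

lemma integral_mat_L2_inner_act: "(\<integral>g. mat_L2_inner mu B (act g A) \<partial>lam) = mat_L2_inner mu B (Psi A)"
  unfolding Psi_op_eq_integral_act by (rule integral_bounded_linear[OF bounded_linear_mat_L2_inner integrable_act])

lemma mat_L2_inner_Psi_self: "mat_L2_inner mu (Psi A) (Psi A) = mat_L2_inner mu A (Psi A)"
proof -
  have "mat_L2_inner mu (Psi A) (Psi A) = (\<integral>g. mat_L2_inner mu (Psi A) (act g A) \<partial>lam)"
    by (rule integral_mat_L2_inner_act[symmetric])
  also have "\<dots> = (\<integral>g. mat_L2_inner mu (act g (Psi A)) (act g A) \<partial>lam)"
    by (intro Bochner_Integration.integral_cong) (simp_all add: act_Psi_op)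
  also have "\<dots> = (\<integral>g. mat_L2_inner mu (Psi A) A \<partial>lam)"
    by (intro Bochner_Integration.integral_cong) (simp_all add: mat_L2_inner_act)
  finally show ?thesis by (simp add: mat_L2_inner_commute)
qed

lemma orbit_deviation_eq:
  assumes "g \<in> carrier G"
  shows "mat_L2_inner mu (A - act g A) (A - act g A) = 2 * mat_L2_inner mu A A - 2 * mat_L2_inner mu A (act g A)"
  using mat_L2_inner_act[OF assms, of A A] mat_L2_inner_commute[of mu A "act g A"]
  by (simp add: mat_L2_inner_diff_left mat_L2_inner_diff_right)

lemma integrable_orbit_deviation: "integrable lam (\<lambda>g. mat_L2_inner mu (A - act g A) (A - act g A))"
proof -
  have "integrable lam (\<lambda>g. 2 * mat_L2_inner mu A A - 2 * mat_L2_inner mu A (act g A))"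
    using integrable_bounded_linear[OF bounded_linear_mat_L2_inner integrable_act] by simp
  moreover have "integrable lam (\<lambda>g. mat_L2_inner mu (A - act g A) (A - act g A))
      \<longleftrightarrow> integrable lam (\<lambda>g. 2 * mat_L2_inner mu A A - 2 * mat_L2_inner mu A (act g A))"
    by (rule Bochner_Integration.integrable_cong) (simp_all add: orbit_deviation_eq)
  ultimately show ?thesis by simp
qed

lemma integral_orbit_deviation:
  "(\<integral>g. mat_L2_inner mu (A - act g A) (A - act g A) \<partial>lam) = 2 * mat_L2_inner mu (A - Psi A) (A - Psi A)"
proof -
  have "(\<integral>g. mat_L2_inner mu (A - act g A) (A - act g A) \<partial>lam)
      = (\<integral>g. 2 * mat_L2_inner mu A A - 2 * mat_L2_inner mu A (act g A) \<partial>lam)"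
    by (intro Bochner_Integration.integral_cong) (simp_all add: orbit_deviation_eq)
  also have "\<dots> = 2 * mat_L2_inner mu A A - 2 * mat_L2_inner mu A (Psi A)"
    using integrable_bounded_linear[OF bounded_linear_mat_L2_inner integrable_act]
    by (simp add: integral_mat_L2_inner_act)
  also have "\<dots> = 2 * mat_L2_inner mu (A - Psi A) (A - Psi A)"
    using mat_L2_inner_Psi_self[of A] mat_L2_inner_commute[of mu A "Psi A"]
    by (simp add: mat_L2_inner_diff_left mat_L2_inner_diff_right)
  finally show ?thesis .
qed

lemma borel_measurable_orbit_deviation_pair:
  "(\<lambda>(x, g). ennreal ((norm ((A - act g A) *v x))\<^sup>2)) \<in> borel_measurable (mu \<Otimes>\<^sub>M lam)"
proof -
  have "fst \<in> borel_measurable (mu \<Otimes>\<^sub>M lam)"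
    by (subst measurable_cong_sets[OF refl sets_mu[symmetric]]) (rule measurable_fst)
  moreover have "(\<lambda>p. (psi (inv (snd p)), phi (snd p))) \<in> borel_measurable (mu \<Otimes>\<^sub>M lam)" by measurable
  ultimately have "(\<lambda>p. (\<lambda>y PQ. (norm ((A - fst PQ ** A ** snd PQ) *v y))\<^sup>2)
      (fst p) (psi (inv (snd p)), phi (snd p))) \<in> borel_measurable (mu \<Otimes>\<^sub>M lam)"
    by (rule borel_measurable_continuous_Pair) (intro continuous_intros)
  then show ?thesis by (simp add: act_def case_prod_beta')
qed

lemma nn_integral_orbit_deviation:
  "(\<integral>\<^sup>+x. (\<integral>\<^sup>+g. ennreal ((norm ((A - act g A) *v x))\<^sup>2) \<partial>lam) \<partial>mu)
    = ennreal (2 * mat_L2_inner mu (A - Psi A) (A - Psi A))"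
proof -
  interpret pair_sigma_finite mu lam
    using prob_mu by (simp add: pair_sigma_finite_def haar.sigma_finite_measure_axioms prob_space_imp_sigma_finite)
  have "(\<integral>\<^sup>+x. (\<integral>\<^sup>+g. ennreal ((norm ((A - act g A) *v x))\<^sup>2) \<partial>lam) \<partial>mu)
      = (\<integral>\<^sup>+g. ennreal (mat_L2_inner mu (A - act g A) (A - act g A)) \<partial>lam)"
    using Fubini'[OF borel_measurable_orbit_deviation_pair] by (simp add: nn_integral_norm_mult_vector_sq)
  also have "\<dots> = ennreal (\<integral>g. mat_L2_inner mu (A - act g A) (A - act g A) \<partial>lam)"
    by (rule nn_integral_eq_integral[OF integrable_orbit_deviation]) (simp add: mat_L2_inner_self)
  finally show ?thesis by (simp add: integral_orbit_deviation)
qed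

lemma nn_integral_symmetrisation_gap_le:
  assumes lip: "\<forall>a b. \<bar>s a - s b\<bar> \<le> C * \<bar>a - b\<bar>"
    and equiv: "\<forall>g\<in>carrier G. \<forall>v. elementwise s (psi g *v v) = psi g *v elementwise s v"
  shows "(\<integral>\<^sup>+x. ennreal ((norm (elementwise s (W *v x) - Qop G lam phi psi (\<lambda>x. elementwise s (W *v x)) x))\<^sup>2) \<partial>mu)
    \<le> ennreal (2 * C\<^sup>2 * mat_L2_inner mu (W - Psi W) (W - Psi W))"
proof -
  have "ennreal (C\<^sup>2 * (\<integral>g. (norm ((W - act g W) *v x))\<^sup>2 \<partial>lam))
      = ennreal (C\<^sup>2) * (\<integral>\<^sup>+g. ennreal ((norm ((W - act g W) *v x))\<^sup>2) \<partial>lam)" for x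
    unfolding act_def
    by (subst nn_integral_eq_integral)
      (simp_all add: ennreal_mult' integrable_rep[where H="\<lambda>P Q. (norm ((W - P ** W ** Q) *v x))\<^sup>2"]
        continuous_intros)
  then have "(\<integral>\<^sup>+x. ennreal ((norm (elementwise s (W *v x) - Qop G lam phi psi (\<lambda>x. elementwise s (W *v x)) x))\<^sup>2) \<partial>mu)
      \<le> (\<integral>\<^sup>+x. ennreal (C\<^sup>2) * (\<integral>\<^sup>+g. ennreal ((norm ((W - act g W) *v x))\<^sup>2) \<partial>lam) \<partial>mu)"
    using norm_symmetrisation_gap_sq_le[OF lip equiv] by (intro nn_integral_mono) (metis ennreal_leI)
  also have "\<dots> = ennreal (C\<^sup>2) * ennreal (2 * mat_L2_inner mu (W - Psi W) (W - Psi W))"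
    using borel_measurable_orbit_deviation_pair[of W]
    by (simp add: nn_integral_cmult haar.borel_measurable_nn_integral nn_integral_orbit_deviation)
  finally show ?thesis by (simp add: ennreal_mult'[symmetric] mult_ac)
qed

end

theorem proposition7p3:
  fixes G :: "('g, 'b) monoid_scheme" and T :: "'g topology" and lam :: "'g measure"
    and phi :: "'g \<Rightarrow> real^'d^'d" and psi :: "'g \<Rightarrow> real^'k^'k"
    and sigma :: "real \<Rightarrow> real" and C :: real
    and W :: "real^'d^'k" and mu :: "(real^'d) measure"
  assumes grp: "compact_top_group G T"
    and haar: "haar_prob G T lam"
    and rep_phi: "orth_rep G lam phi"
    and rep_psi: "orth_rep G lam psi"
    and lip: "\<forall>a b. \<bar>sigma a - sigma b\<bar> \<le> C * \<bar>a - b\<bar>"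
    and equiv: "\<forall>g\<in>carrier G. \<forall>v. elementwise sigma (psi g *v v) = psi g *v elementwise sigma v"
    and mu_prob: "prob_space mu" and mu_sets: "sets mu = sets borel"
    and mu_inv: "\<forall>g\<in>carrier G. distr mu borel (\<lambda>x. phi g *v x) = mu"
    and cov: "integrable mu (\<lambda>x. norm x ^ 2)"
    and L2: "(\<lambda>x. elementwise sigma (W *v x)) \<in> borel_measurable mu"
            "integrable mu (\<lambda>x. norm (elementwise sigma (W *v x)) ^ 2)"
  shows "(let f = (\<lambda>x. elementwise sigma (W *v x));
              Wp = W - Psi_op G lam phi psi W;
              R = psd_sqrt (second_moment mu)
          in (\<integral>\<^sup>+ x. ennreal ((norm (f x - Qop G lam phi psi f x))^2) \<partial>mu)
               \<le> ennreal (2 * C^2 * (frob_norm (Wp ** R))^2)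
             \<and> 2 * C^2 * (frob_norm (Wp ** R))^2 \<le> 2 * C^2 * (frob_norm R)^2 * (frob_norm Wp)^2)"
proof -
  interpret invariant_second_moment G T lam phi psi mu
    using grp haar rep_phi rep_psi mu_sets cov mu_prob mu_inv
    by (intro invariant_second_moment.intro haar_orth_reps.intro compact_haar_group.intro
        haar_orth_reps_axioms.intro finite_second_moment.intro invariant_second_moment_axioms.intro)
  let ?R = "psd_sqrt (second_moment mu)" and ?Wp = "W - Psi W"
  have "(\<integral>\<^sup>+ x. ennreal ((norm (elementwise sigma (W *v x) - Qop G lam phi psi (\<lambda>x. elementwise sigma (W *v x)) x))\<^sup>2) \<partial>mu)
      \<le> ennreal (2 * C\<^sup>2 * (frob_norm (?Wp ** ?R))\<^sup>2)"
    using nn_integral_symmetrisation_gap_le[OF lip equiv] by (simp add: mat_L2_inner_self)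
  moreover have "2 * C\<^sup>2 * (frob_norm (?Wp ** ?R))\<^sup>2 \<le> 2 * C\<^sup>2 * (frob_norm ?R)\<^sup>2 * (frob_norm ?Wp)\<^sup>2"
    using mult_left_mono[OF frob_norm_mult_sq_le[of ?Wp ?R], of "2 * C\<^sup>2"] by (simp add: mult_ac)
  ultimately show ?thesis by (simp add: Let_def)
qed

end
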